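(* Let $N,L\geq1$ be integers, $\sigma_p^2>0$, $N_0>0$ and $\mathcal{Y}\geq0$. For a normalized threshold $\lambda'\geq0$ let $$P_d(\lambda')=Q_{NL}\!\left(\sqrt{\frac{2L\sigma_p^2\mathcal{Y}}{N_0}},\sqrt{\lambda'}\right),\qquad P_f(\lambda')=\frac{\Gamma\!\left(NL,\frac{\lambda'}{2}\right)}{\Gamma(NL)},$$ and define $$\mathrm{AUC}(\mathcal{Y})\triangleq-\int_0^\infty P_d(\lambda')\frac{\partial P_f(\lambda')}{\partial\lambda'}\,d\lambda'.$$ Then $$\mathrm{AUC}(\mathcal{Y})=1-\exp\!\left(-\frac{L\sigma_p^2\mathcal{Y}}{N_0}\right)\sum_{l=0}^{NL-1}\frac{(NL)_l}{l!\,2^{NL+l}}\,{}_1F_1\!\left(NL+l,NL;\frac{L\sigma_p^2\mathcal{Y}}{2N_0}\right).$$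
   Context: $Q_\nu(a,b)$ is the generalized $\nu$th-order Marcum $Q$-function, $Q_\nu(a,b)=a^{1-\nu}\int_b^\infty x^{\nu}\exp\!\left(-\frac{x^2+a^2}{2}\right)I_{\nu-1}(ax)\,dx$ (for $a=0$ it equals $\Gamma(\nu,b^2/2)/\Gamma(\nu)$). $\Gamma(\cdot,\cdot)$ is the upper incomplete Gamma function, $(x)_l=x(x+1)\cdots(x+l-1)$ is the Pochhammer symbol, and ${}_1F_1$ is Kummer's confluent hypergeometric function. *)

theory Defs
  imports "HOL-Analysis.Analysis"
begin

definition upper_gamma :: "nat \<Rightarrow> real \<Rightarrow> real" where
  "upper_gamma s x = integral {x..} (\<lambda>t. t ^ (s - 1) * exp (- t))"

definition besselI :: "nat \<Rightarrow> real \<Rightarrow> real" where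
  "besselI n x = (\<Sum>k. (x / 2) ^ (2 * k + n) / (fact k * fact (k + n)))"

definition marcumQ :: "nat \<Rightarrow> real \<Rightarrow> real \<Rightarrow> real" where
  "marcumQ nu a b =
     (if a = 0 then upper_gamma nu (b^2 / 2) / Gamma (real nu)
      else a powr (1 - real nu) *
        integral {b..} (\<lambda>x. x ^ nu * exp (- (x^2 + a^2) / 2) * besselI (nu - 1) (a * x)))"

definition hyp1F1 :: "real \<Rightarrow> real \<Rightarrow> real \<Rightarrow> real" where
  "hyp1F1 a b z = (\<Sum>k. pochhammer a k / pochhammer b k * z ^ k / fact k)"

end

theory Submission
  imports Defs "HOL-Real_Asymp.Real_Asymp"
begin

text \<open>
  Let X_c denote a Poisson variable of mean c, and put n = NL and c = L sigma_p^2 Y / N_0.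
  Then P_f(lambda) = P(X_{lambda/2} < n), so -P_f' is the Erlang density of order n in lambda/2,
  and expanding the Bessel function termwise shows that P_d(lambda) is the Poisson(c) mixture
  over k of P(X_{lambda/2} < n + k). Against the Erlang density, P(X_{lambda/2} < m) integrates
  to the problem-of-points probability that a fair coin shows n heads before m tails. By the
  symmetry of that game, the probability for m = n + k is one minus a sum of n binomial terms,
  and each of these, summed against the Poisson(c) weights in k, is a Kummer function.
\<close>

definition poisson_prob :: "real \<Rightarrow> nat \<Rightarrow> real" where
  "poisson_prob c k = exp (- c) * c ^ k / fact k"

text \<open>The probability that a Poisson variable of mean c is less than m; for m > 0 this is
  the regularized upper incomplete gamma function Q(m, c).\<close>
definition poisson_cdf :: "real \<Rightarrow> nat \<Rightarrow> real" where
  "poisson_cdf c m = (\<Sum>k<m. poisson_prob c k)"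

lemma poisson_prob_nonneg: "c \<ge> 0 \<Longrightarrow> poisson_prob c k \<ge> 0"
  by (simp add: poisson_prob_def)

lemma poisson_prob_sums: "poisson_prob c sums 1"
proof -
  have "(\<lambda>k. c ^ k / fact k) sums exp c"
    using exp_converges[of c] by (simp add: divide_inverse mult.commute)
  from sums_mult[OF this, of "exp (- c)"] show ?thesis
    by (simp add: poisson_prob_def [abs_def] mult_exp_exp)
qed

lemma poisson_cdf_nonneg: "c \<ge> 0 \<Longrightarrow> poisson_cdf c m \<ge> 0"
  by (simp add: poisson_cdf_def poisson_prob_nonneg sum_nonneg)

lemma poisson_cdf_le_1: "c \<ge> 0 \<Longrightarrow> poisson_cdf c m \<le> 1"
  unfolding poisson_cdf_def
  using sum_le_suminf[OF sums_summable[OF poisson_prob_sums], of "{..<m}"]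
    sums_unique[OF poisson_prob_sums] by (simp add: poisson_prob_nonneg)

lemma poisson_cdf_0: "poisson_cdf 0 (Suc m) = 1"
  unfolding poisson_cdf_def sum.lessThan_Suc_shift by (simp add: poisson_prob_def)

lemma poisson_cdf_tendsto_0: "((\<lambda>x. poisson_cdf x m) \<longlongrightarrow> 0) at_top"
  unfolding poisson_cdf_def poisson_prob_def by (intro tendsto_null_sum) real_asymp

lemma has_real_derivative_poisson_prob_Suc:
  "((\<lambda>x. poisson_prob x (Suc m)) has_real_derivative poisson_prob x m - poisson_prob x (Suc m)) (at x)"
proof -
  have "((\<lambda>x. exp (- x) * x ^ Suc m) has_real_derivative
      exp (- x) * (real (Suc m) * x ^ m) - exp (- x) * x ^ Suc m) (at x)"
    by (rule derivative_eq_intros refl | simp add: algebra_simps)+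
  from DERIV_cdivide[OF this, of "fact (Suc m)"] show ?thesis
    by (simp add: poisson_prob_def diff_divide_distrib fact_Suc del: of_nat_Suc)
qed

lemma has_real_derivative_poisson_cdf:
  "((\<lambda>x. poisson_cdf x (Suc m)) has_real_derivative - poisson_prob x m) (at x)"
proof (induction m)
  case 0
  show ?case by (auto simp: poisson_cdf_def poisson_prob_def intro!: derivative_eq_intros)
next
  case (Suc m)
  have "(\<lambda>x. poisson_cdf x (Suc (Suc m))) = (\<lambda>x. poisson_cdf x (Suc m) + poisson_prob x (Suc m))"
    by (simp add: poisson_cdf_def fun_eq_iff)
  with DERIV_add[OF Suc.IH has_real_derivative_poisson_prob_Suc[of m x]] show ?case
    by simp
qed

lemma pochhammer_of_nat_Suc: "pochhammer (real (Suc m)) k = fact (m + k) / fact m"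
  using pochhammer_product'[of "1::real" m k] by (simp flip: pochhammer_fact add: add.commute)

lemma has_integral_Ici_FTC:
  fixes f F :: "real \<Rightarrow> real"
  assumes deriv: "\<And>x. x \<ge> a \<Longrightarrow> (F has_real_derivative f x) (at x)"
    and cont: "continuous_on {a..} f"
    and lim: "(F \<longlongrightarrow> l) at_top"
    and nonneg: "\<And>x. x \<ge> a \<Longrightarrow> f x \<ge> 0"
  shows "(f has_integral (l - F a)) {a..}"
proof (rule has_integral_to_inf)
  show "f integrable_on {a..y}" for y
    by (rule integrable_continuous_interval) (rule continuous_on_subset[OF cont], auto)
next
  have "(f has_integral (F y - F a)) {a..y}" if "y \<ge> a" for y
    using that by (intro fundamental_theorem_of_calculus)
      (auto intro!: has_field_derivative_at_within deriv
        simp flip: has_real_derivative_iff_has_vector_derivative)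
  then have "\<forall>\<^sub>F y in at_top. integral {a..y} f = F y - F a"
    using eventually_at_top_linorder[of "\<lambda>y. integral {a..y} f = F y - F a"]
    by (auto intro: integral_unique)
  moreover have "((\<lambda>y. F y - F a) \<longlongrightarrow> l - F a) at_top"
    by (intro tendsto_diff lim tendsto_const)
  ultimately show "((\<lambda>y. integral {a..y} f) \<longlongrightarrow> l - F a) at_top"
    by (simp add: filterlim_cong)
qed (use nonneg in auto)

lemma has_integral_power_mult_exp_Ici:
  assumes "x \<ge> 0"
  shows "((\<lambda>t. t ^ m * exp (- t)) has_integral fact m * poisson_cdf x (Suc m)) {x..}"
proof -
  have "((\<lambda>t. t ^ m * exp (- t)) has_integral 0 - (- fact m * poisson_cdf x (Suc m))) {x..}"
  proof (rule has_integral_Ici_FTC)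
    show "((\<lambda>t. - fact m * poisson_cdf t (Suc m)) has_real_derivative t ^ m * exp (- t)) (at t)" for t
      using DERIV_cmult[OF has_real_derivative_poisson_cdf, of "- fact m" m t]
      by (simp add: poisson_prob_def mult.commute)
    show "((\<lambda>t. - fact m * poisson_cdf t (Suc m)) \<longlongrightarrow> 0) at_top"
      by (rule tendsto_mult_right_zero[OF poisson_cdf_tendsto_0])
  qed (use assms in \<open>auto intro!: continuous_intros\<close>)
  then show ?thesis by simp
qed

lemma upper_gamma_Suc_div_Gamma:
  "x \<ge> 0 \<Longrightarrow> upper_gamma (Suc m) x / Gamma (real (Suc m)) = poisson_cdf x (Suc m)"
  unfolding upper_gamma_def
  using integral_unique[OF has_integral_power_mult_exp_Ici, of x m] by (simp add: Gamma_fact)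

lemma has_integral_odd_power_mult_gauss_Ici:
  assumes "b \<ge> 0"
  shows "((\<lambda>x. x ^ (2 * m + 1) * exp (- (x\<^sup>2) / 2)) has_integral
           2 ^ m * fact m * poisson_cdf (b\<^sup>2 / 2) (Suc m)) {b..}"
proof -
  define F where "F x = - (2 ^ m * fact m) * poisson_cdf (x\<^sup>2 / 2) (Suc m)" for x :: real
  have "((\<lambda>x. x ^ (2 * m + 1) * exp (- (x\<^sup>2) / 2)) has_integral 0 - F b) {b..}"
  proof (rule has_integral_Ici_FTC)
    fix x :: real
    have "- (2 ^ m * fact m) * (- poisson_prob (x\<^sup>2 / 2) m * (2 * x / 2))
        = (2 ^ m * (x\<^sup>2 / 2) ^ m) * x * exp (- (x\<^sup>2) / 2)"
      by (simp add: poisson_prob_def)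
    also have "\<dots> = x ^ (2 * m + 1) * exp (- (x\<^sup>2) / 2)"
      by (simp add: power_divide power_mult)
    finally have eq: "- (2 ^ m * fact m) * (- poisson_prob (x\<^sup>2 / 2) m * (2 * x / 2))
        = x ^ (2 * m + 1) * exp (- (x\<^sup>2) / 2)" .
    have "(F has_real_derivative - (2 ^ m * fact m) * (- poisson_prob (x\<^sup>2 / 2) m * (2 * x / 2))) (at x)"
      unfolding F_def
      by (intro DERIV_cmult DERIV_chain2[OF has_real_derivative_poisson_cdf])
        (auto intro!: derivative_eq_intros)
    then show "(F has_real_derivative x ^ (2 * m + 1) * exp (- (x\<^sup>2) / 2)) (at x)"
      by (simp only: eq)
  next
    have "filterlim (\<lambda>x::real. x\<^sup>2 / 2) at_top at_top" by real_asymp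
    then show "(F \<longlongrightarrow> 0) at_top"
      unfolding F_def by (intro tendsto_mult_right_zero filterlim_compose[OF poisson_cdf_tendsto_0])
  qed (use assms in \<open>auto intro!: continuous_intros\<close>)
  then show ?thesis by (simp add: F_def)
qed

lemma has_integral_suminf_nonneg:
  fixes u :: "nat \<Rightarrow> 'a::euclidean_space \<Rightarrow> real"
  assumes int: "\<And>k. (u k has_integral I k) S"
    and nonneg: "\<And>k x. x \<in> S \<Longrightarrow> 0 \<le> u k x"
    and sums: "\<And>x. x \<in> S \<Longrightarrow> (\<lambda>k. u k x) sums f x"
    and summable: "summable I"
  shows "(f has_integral suminf I) S"
proof -
  have I_nonneg: "0 \<le> I k" for k
    using has_integral_nonneg[OF int nonneg] .
  have partial: "((\<lambda>x. \<Sum>k<K. u k x) has_integral (\<Sum>k<K. I k)) S" for K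
    by (intro has_integral_sum int) auto
  have integral_partial: "integral S (\<lambda>x. \<Sum>k<K. u k x) = (\<Sum>k<K. I k)" for K
    using partial by (rule integral_unique)
  have conv: "f integrable_on S
      \<and> (\<lambda>K. integral S (\<lambda>x. \<Sum>k<K. u k x)) \<longlonglongrightarrow> integral S f"
  proof (rule monotone_convergence_increasing)
    show "(\<lambda>x. \<Sum>k<K. u k x) integrable_on S" for K
      using partial by blast
    show "(\<Sum>k<K. u k x) \<le> (\<Sum>k<Suc K. u k x)" if "x \<in> S" for K x
      using nonneg[OF that] by simp
    show "(\<lambda>K. \<Sum>k<K. u k x) \<longlonglongrightarrow> f x" if "x \<in> S" for x
      using sums[OF that] by (simp add: sums_def)
    have "norm (\<Sum>k<K. I k) \<le> suminf I" for K
      using sum_le_suminf[OF summable, of "{..<K}"] I_nonneg by (simp add: sum_nonneg)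
    then show "bounded (range (\<lambda>K. integral S (\<lambda>x. \<Sum>k<K. u k x)))"
      unfolding integral_partial by (intro boundedI[of _ "suminf I"]) auto
  qed
  then have "I sums integral S f"
    by (simp add: sums_def integral_partial)
  then have "suminf I = integral S f"
    by (rule sums_unique [symmetric])
  with conv show ?thesis
    by (simp add: integrable_integral)
qed

lemma summable_poisson_prob_mult:
  assumes "c \<ge> 0" and "\<And>k. 0 \<le> g k" and "\<And>k. g k \<le> 1"
  shows "summable (\<lambda>k. poisson_prob c k * g k)"
proof (rule summable_comparison_test'[OF sums_summable[OF poisson_prob_sums]])
  show "norm (poisson_prob c k * g k) \<le> poisson_prob c k" for k
    using assms poisson_prob_nonneg[OF \<open>c \<ge> 0\<close>, of k] by (simp add: mult_left_le)
qed

lemma summable_besselI_series: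
  fixes y :: real
  shows "summable (\<lambda>k. (y / 2) ^ (2 * k + n) / (fact k * fact (k + n)))"
proof (rule summable_comparison_test')
  show "summable (\<lambda>k. \<bar>y / 2\<bar> ^ n * ((y / 2)\<^sup>2 ^ k / fact k))"
    by (rule summable_mult)
      (use summable_exp[of "(y / 2)\<^sup>2"] in \<open>simp only: divide_inverse_commute\<close>)
  fix k
  have split: "\<bar>y / 2\<bar> ^ (2 * k + n) = \<bar>y / 2\<bar> ^ n * (y / 2)\<^sup>2 ^ k"
    unfolding power_add power_mult power2_abs by (rule mult.commute)
  have fact_le: "fact k \<le> fact k * (fact (k + n) :: real)"
    using fact_ge_1[of "k + n", where 'a = real] by (simp add: mult_le_cancel_left1)
  have "norm ((y / 2) ^ (2 * k + n) / (fact k * fact (k + n)))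
      \<le> \<bar>y / 2\<bar> ^ (2 * k + n) / fact k"
    by (simp add: norm_divide power_abs) (rule divide_left_mono[OF fact_le]; simp)
  also have "\<dots> = \<bar>y / 2\<bar> ^ n * ((y / 2)\<^sup>2 ^ k / fact k)"
    by (simp only: split times_divide_eq_right)
  finally show "norm ((y / 2) ^ (2 * k + n) / (fact k * fact (k + n)))
      \<le> \<bar>y / 2\<bar> ^ n * ((y / 2)\<^sup>2 ^ k / fact k)" .
qed

lemma marcumQ_integrand_term_eq:
  fixes a x :: real
  assumes "a > 0"
  shows "a powr (1 - real (Suc p)) * (x ^ Suc p * exp (- (x\<^sup>2 + a\<^sup>2) / 2)
           * ((a * x / 2) ^ (2 * k + p) / (fact k * fact (k + p))))
       = poisson_prob (a\<^sup>2 / 2) k / (2 ^ (k + p) * fact (k + p))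
           * (x ^ (2 * (k + p) + 1) * exp (- (x\<^sup>2) / 2))"
proof -
  have powr: "a powr (1 - real (Suc p)) = 1 / a ^ p"
    using assms by (simp add: powr_minus_divide powr_realpow)
  have exp_split: "exp (- (x\<^sup>2 + a\<^sup>2) / 2) = exp (- (a\<^sup>2 / 2)) * exp (- (x\<^sup>2) / 2)"
    by (simp add: exp_add [symmetric] field_simps)
  have a_pow: "a ^ (2 * k + p) = a ^ p * (a\<^sup>2) ^ k"
    by (simp add: power_add power_mult [symmetric] mult.commute)
  have x_pow: "x ^ Suc p * x ^ (2 * k + p) = x ^ (2 * (k + p) + 1)"
    by (simp add: power_add [symmetric] add_ac)
  have two_pow: "(2::real) ^ (2 * k + p) = 2 ^ k * 2 ^ (k + p)"
    by (simp add: power_add [symmetric])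
  have "a powr (1 - real (Suc p)) * (x ^ Suc p * exp (- (x\<^sup>2 + a\<^sup>2) / 2)
           * ((a * x / 2) ^ (2 * k + p) / (fact k * fact (k + p))))
      = 1 / a ^ p * (x ^ Suc p * (exp (- (a\<^sup>2 / 2)) * exp (- (x\<^sup>2) / 2))
           * (a ^ p * (a\<^sup>2) ^ k * x ^ (2 * k + p) / (2 ^ k * 2 ^ (k + p)) / (fact k * fact (k + p))))"
    unfolding powr exp_split by (simp add: power_mult_distrib power_divide a_pow two_pow)
  also have "\<dots> = exp (- (a\<^sup>2 / 2)) * ((a\<^sup>2) ^ k / 2 ^ k) / (fact k * fact (k + p) * 2 ^ (k + p))
           * ((x ^ Suc p * x ^ (2 * k + p)) * exp (- (x\<^sup>2) / 2))"
    using assms by (simp add: field_simps)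
  also have "\<dots> = poisson_prob (a\<^sup>2 / 2) k / (2 ^ (k + p) * fact (k + p))
           * (x ^ (2 * (k + p) + 1) * exp (- (x\<^sup>2) / 2))"
    unfolding x_pow by (simp add: poisson_prob_def power_divide field_simps)
  finally show ?thesis .
qed

lemma marcumQ_Suc_sums:
  assumes "a \<ge> 0" and "b \<ge> 0"
  shows "(\<lambda>k. poisson_prob (a\<^sup>2 / 2) k * poisson_cdf (b\<^sup>2 / 2) (Suc (k + p)))
           sums marcumQ (Suc p) a b"
proof (cases "a = 0")
  case True
  then have "(\<lambda>k. poisson_prob (a\<^sup>2 / 2) k * poisson_cdf (b\<^sup>2 / 2) (Suc (k + p)))
      = (\<lambda>k. if k = 0 then poisson_cdf (b\<^sup>2 / 2) (Suc (k + p)) else 0)"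
    by (simp add: fun_eq_iff poisson_prob_def)
  moreover have "marcumQ (Suc p) a b = poisson_cdf (b\<^sup>2 / 2) (Suc p)"
    using True upper_gamma_Suc_div_Gamma[of "b\<^sup>2 / 2" p] by (simp add: marcumQ_def)
  ultimately show ?thesis
    using sums_single[of 0 "\<lambda>k. poisson_cdf (b\<^sup>2 / 2) (Suc (k + p))"] by simp
next
  case False
  with \<open>a \<ge> 0\<close> have a: "a > 0" by simp
  define I where "I = (\<lambda>k. poisson_prob (a\<^sup>2 / 2) k * poisson_cdf (b\<^sup>2 / 2) (Suc (k + p)))"
  define u where "u k x = a powr (1 - real (Suc p)) * (x ^ Suc p * exp (- (x\<^sup>2 + a\<^sup>2) / 2)
      * ((a * x / 2) ^ (2 * k + p) / (fact k * fact (k + p))))" for k x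
  have summable: "summable I"
    unfolding I_def
    by (intro summable_poisson_prob_mult poisson_cdf_nonneg poisson_cdf_le_1) auto
  have "((\<lambda>x. a powr (1 - real (Suc p)) * (x ^ Suc p * exp (- (x\<^sup>2 + a\<^sup>2) / 2) * besselI p (a * x)))
      has_integral suminf I) {b..}"
  proof (rule has_integral_suminf_nonneg)
    show "(u k has_integral I k) {b..}" for k
    proof -
      have "(u k has_integral poisson_prob (a\<^sup>2 / 2) k / (2 ^ (k + p) * fact (k + p))
          * (2 ^ (k + p) * fact (k + p) * poisson_cdf (b\<^sup>2 / 2) (Suc (k + p)))) {b..}"
        unfolding u_def marcumQ_integrand_term_eq[OF a]
        by (intro has_integral_mult_right has_integral_odd_power_mult_gauss_Ici \<open>b \<ge> 0\<close>)
      then show ?thesis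
        by (simp add: I_def)
    qed
    show "0 \<le> u k x" if "x \<in> {b..}" for k x
      using that \<open>b \<ge> 0\<close> unfolding u_def marcumQ_integrand_term_eq[OF a]
      by (simp add: poisson_prob_nonneg)
    show "(\<lambda>k. u k x) sums (a powr (1 - real (Suc p))
        * (x ^ Suc p * exp (- (x\<^sup>2 + a\<^sup>2) / 2) * besselI p (a * x)))" for x
      unfolding u_def besselI_def
      by (intro sums_mult summable_sums summable_besselI_series)
  qed (rule summable)
  from integral_unique[OF this] a have "marcumQ (Suc p) a b = suminf I"
    by (simp add: marcumQ_def)
  with summable show ?thesis
    unfolding I_def by (simp add: summable_sums)
qed

text \<open>The probability that a fair coin shows a + 1 heads before b tails.\<close>
definition points_prob :: "nat \<Rightarrow> nat \<Rightarrow> real" where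
  "points_prob a b = (\<Sum>l<b. real ((a + l) choose l) / 2 ^ (a + l + 1))"

lemma points_prob_nonneg: "points_prob a b \<ge> 0"
  by (simp add: points_prob_def sum_nonneg)

lemma points_prob_diff_Suc:
  "points_prob b k - points_prob (Suc b) k = real ((b + k) choose Suc b) / 2 ^ (b + k + 1)"
proof (induction k)
  case 0
  show ?case by (simp add: points_prob_def)
next
  case (Suc k)
  have pascal: "real ((b + k) choose Suc b) + real ((b + k) choose k) = real ((b + k + 1) choose k)"
    using binomial_Suc_Suc[of "b + k" b] binomial_symmetric[of k "b + k"]
      binomial_symmetric[of k "b + k + 1"] by simp
  have "points_prob b (Suc k) - points_prob (Suc b) (Suc k)
      = (points_prob b k - points_prob (Suc b) k) + real ((b + k) choose k) / 2 ^ (b + k + 1)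
        - real ((Suc b + k) choose k) / 2 ^ (Suc b + k + 1)"
    by (simp add: points_prob_def)
  also have "\<dots> = (real ((b + k) choose Suc b) + real ((b + k) choose k)) / 2 ^ (b + k + 1)
        - real ((Suc b + k) choose k) / 2 ^ (Suc b + k + 1)"
    unfolding Suc.IH by (simp add: add_divide_distrib)
  also have "\<dots> = real ((b + k + 1) choose k) / 2 ^ (b + k + 1)
        - real ((b + k + 1) choose k) / 2 ^ (b + k + 2)"
    unfolding pascal by simp
  also have "\<dots> = real ((b + k + 1) choose k) / 2 ^ (b + Suc k + 1)"
    by (simp add: field_simps)
  also have "(b + k + 1) choose k = (b + Suc k) choose Suc b"
    using binomial_symmetric[of k "b + k + 1"] by simp
  finally show ?case .
qed

lemma points_prob_complement: "points_prob a (Suc b) + points_prob b (Suc a) = 1"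
proof (induction b)
  case 0
  have "(\<Sum>l<Suc a. 1 / 2 ^ (l + 1) :: real) = 1 - 1 / 2 ^ (a + 1)"
    by (induction a) (auto simp: field_simps)
  then show ?case by (simp add: points_prob_def)
next
  case (Suc b)
  have "points_prob a (Suc (Suc b))
      = points_prob a (Suc b) + real ((a + Suc b) choose Suc b) / 2 ^ (a + Suc b + 1)"
    by (simp add: points_prob_def)
  moreover have "points_prob (Suc b) (Suc a)
      = points_prob b (Suc a) - real ((b + Suc a) choose Suc b) / 2 ^ (b + Suc a + 1)"
    using points_prob_diff_Suc[of b "Suc a"] by simp
  ultimately show ?case using Suc.IH by (simp add: add_ac)
qed

lemma points_prob_le_1: "points_prob a b \<le> 1"
proof -
  have "points_prob a b \<le> points_prob a (Suc b)"
    by (simp add: points_prob_def)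
  also have "\<dots> = 1 - points_prob b (Suc a)"
    using points_prob_complement[of a b] by simp
  also have "\<dots> \<le> 1"
    using points_prob_nonneg by simp
  finally show ?thesis .
qed

lemma has_integral_poisson_cdf_mult_poisson_prob:
  "((\<lambda>x. poisson_cdf (x / 2) m * (poisson_prob (x / 2) p / 2)) has_integral points_prob p m) {0..}"
proof -
  define w where "w j = 1 / (fact j * fact p * 2 ^ (j + p + 1) :: real)" for j
  have expand: "poisson_cdf (x / 2) m * (poisson_prob (x / 2) p / 2)
      = (\<Sum>j<m. w j * (x ^ (j + p) * exp (- x)))" for x :: real
  proof -
    have "exp (- (x / 2)) * exp (- (x / 2)) = exp (- x)"
      by (simp add: exp_add [symmetric])
    then show ?thesis
      unfolding poisson_cdf_def poisson_prob_def w_def sum_distrib_right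
      by (intro sum.cong refl) (simp add: power_add power_divide field_simps)
  qed
  have "((\<lambda>x. \<Sum>j<m. w j * (x ^ (j + p) * exp (- x))) has_integral
      (\<Sum>j<m. w j * (fact (j + p) * poisson_cdf 0 (Suc (j + p))))) {0..}"
    by (intro has_integral_sum has_integral_mult_right has_integral_power_mult_exp_Ici) auto
  moreover have "w j * (fact (j + p) * poisson_cdf 0 (Suc (j + p)))
      = real ((p + j) choose j) / 2 ^ (p + j + 1)" for j
    using binomial_fact[of j "p + j", where 'a = real] by (simp add: w_def poisson_cdf_0 add_ac field_simps)
  ultimately show ?thesis
    unfolding expand points_prob_def by simp
qed

lemma poisson_prob_mult_binomial_eq_hyp1F1_term:
  fixes c :: real
  shows "poisson_prob c k * (real ((k + p + l) choose l) / 2 ^ (k + p + l + 1))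
    = exp (- c) * (pochhammer (real (Suc p)) l / (fact l * 2 ^ (Suc p + l)))
      * (pochhammer (real (Suc p + l)) k / pochhammer (real (Suc p)) k * (c / 2) ^ k / fact k)"
proof -
  have shift: "real (Suc p + l) = real (Suc (p + l))"
    by simp
  have binomial: "real ((k + p + l) choose l) = fact (k + p + l) / (fact l * fact (k + p))"
    using binomial_fact[of l "k + p + l"] by simp
  have "fact (p + l + k) = (fact (k + p + l) :: real)" and "fact (p + k) = (fact (k + p) :: real)"
    by (simp_all add: add_ac)
  then show ?thesis
    unfolding shift pochhammer_of_nat_Suc binomial poisson_prob_def
    by (simp add: power_divide power_add field_simps)
qed

lemma poisson_prob_mult_binomial_sums_hyp1F1:
  assumes "c \<ge> 0"
  shows "(\<lambda>k. poisson_prob c k * (real ((k + p + l) choose l) / 2 ^ (k + p + l + 1)))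
    sums (exp (- c) * (pochhammer (real (Suc p)) l / (fact l * 2 ^ (Suc p + l)))
          * hyp1F1 (real (Suc p + l)) (real (Suc p)) (c / 2))"
proof -
  define K where "K = exp (- c) * (pochhammer (real (Suc p)) l / (fact l * 2 ^ (Suc p + l)))"
  define G where "G = (\<lambda>k. pochhammer (real (Suc p + l)) k / pochhammer (real (Suc p)) k
    * (c / 2) ^ k / fact k)"
  have K: "K \<noteq> 0"
    using pochhammer_pos[of "real (Suc p)" l] by (simp add: K_def)
  have "(k + p + l) choose l \<le> 2 ^ (k + p + l + 1)" for k
    using binomial_le_pow2[of "k + p + l" l] by simp
  then have "real ((k + p + l) choose l) \<le> 2 ^ (k + p + l + 1)" for k
    by (metis of_nat_le_iff of_nat_numeral of_nat_power)
  then have "summable (\<lambda>k. poisson_prob c k * (real ((k + p + l) choose l) / 2 ^ (k + p + l + 1)))"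
    by (intro summable_poisson_prob_mult assms) (auto simp: divide_le_eq)
  then have "summable (\<lambda>k. K * G k)"
    unfolding poisson_prob_mult_binomial_eq_hyp1F1_term K_def G_def .
  then have "G sums suminf G"
    using K summable_cmult_iff[of K G] by (simp add: summable_sums)
  then have "G sums hyp1F1 (real (Suc p + l)) (real (Suc p)) (c / 2)"
    unfolding hyp1F1_def G_def .
  from sums_mult[OF this, of K] show ?thesis
    unfolding poisson_prob_mult_binomial_eq_hyp1F1_term K_def G_def .
qed

lemma poisson_mixture_points_prob_sums:
  assumes "c \<ge> 0"
  shows "(\<lambda>k. poisson_prob c k * points_prob p (Suc (k + p)))
    sums (1 - exp (- c) * (\<Sum>l<Suc p. pochhammer (real (Suc p)) l / (fact l * 2 ^ (Suc p + l))
                             * hyp1F1 (real (Suc p + l)) (real (Suc p)) (c / 2)))"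
proof -
  have complement: "points_prob p (Suc (k + p))
      = 1 - (\<Sum>l<Suc p. real ((k + p + l) choose l) / 2 ^ (k + p + l + 1))" for k
    using points_prob_complement[of p "k + p", unfolded points_prob_def [of "k + p"]] by linarith
  have termwise: "(\<lambda>k. poisson_prob c k * points_prob p (Suc (k + p))) = (\<lambda>k. poisson_prob c k
      - (\<Sum>l<Suc p. poisson_prob c k * (real ((k + p + l) choose l) / 2 ^ (k + p + l + 1))))"
    unfolding complement sum_distrib_left [symmetric] right_diff_distrib mult_1_right ..
  have "(\<lambda>k. poisson_prob c k
      - (\<Sum>l<Suc p. poisson_prob c k * (real ((k + p + l) choose l) / 2 ^ (k + p + l + 1))))
    sums (1 - (\<Sum>l<Suc p. exp (- c) * (pochhammer (real (Suc p)) l / (fact l * 2 ^ (Suc p + l)))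
                * hyp1F1 (real (Suc p + l)) (real (Suc p)) (c / 2)))"
    by (intro sums_diff poisson_prob_sums sums_sum poisson_prob_mult_binomial_sums_hyp1F1 assms)
  then show ?thesis
    unfolding termwise sum_distrib_left by (simp only: mult.assoc)
qed

lemma integral_poisson_mixture_mult_poisson_prob:
  assumes "c \<ge> 0"
    and mixture: "\<And>x. x \<ge> 0 \<Longrightarrow>
      (\<lambda>k. poisson_prob c k * poisson_cdf (x / 2) (Suc (k + p))) sums g x"
  shows "integral {0..} (\<lambda>x. g x * (poisson_prob (x / 2) p / 2))
    = 1 - exp (- c) * (\<Sum>l<Suc p. pochhammer (real (Suc p)) l / (fact l * 2 ^ (Suc p + l))
                         * hyp1F1 (real (Suc p + l)) (real (Suc p)) (c / 2))"
proof -
  define I where "I = (\<lambda>k. poisson_prob c k * points_prob p (Suc (k + p)))"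
  have "((\<lambda>x. g x * (poisson_prob (x / 2) p / 2)) has_integral suminf I) {0..}"
  proof (rule has_integral_suminf_nonneg)
    show "((\<lambda>x. poisson_prob c k * (poisson_cdf (x / 2) (Suc (k + p)) * (poisson_prob (x / 2) p / 2)))
        has_integral I k) {0..}" for k
      unfolding I_def
      by (intro has_integral_mult_right has_integral_poisson_cdf_mult_poisson_prob)
    show "0 \<le> poisson_prob c k * (poisson_cdf (x / 2) (Suc (k + p)) * (poisson_prob (x / 2) p / 2))"
      if "x \<in> {0..}" for k x
      using that assms(1) by (simp add: poisson_prob_nonneg poisson_cdf_nonneg)
    show "(\<lambda>k. poisson_prob c k * (poisson_cdf (x / 2) (Suc (k + p)) * (poisson_prob (x / 2) p / 2)))
        sums (g x * (poisson_prob (x / 2) p / 2))" if "x \<in> {0..}" for x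
      using sums_mult2[OF mixture, of x "poisson_prob (x / 2) p / 2"] that by (simp add: mult.assoc)
    show "summable I"
      unfolding I_def
      by (intro summable_poisson_prob_mult assms(1) points_prob_nonneg points_prob_le_1)
  qed
  then have "integral {0..} (\<lambda>x. g x * (poisson_prob (x / 2) p / 2)) = suminf I"
    by (rule integral_unique)
  also have "\<dots> = 1 - exp (- c) * (\<Sum>l<Suc p. pochhammer (real (Suc p)) l
      / (fact l * 2 ^ (Suc p + l)) * hyp1F1 (real (Suc p + l)) (real (Suc p)) (c / 2))"
    unfolding I_def by (rule sums_unique [symmetric, OF poisson_mixture_points_prob_sums[OF assms(1)]])
  finally show ?thesis .
qed

lemma deriv_regularized_upper_gamma_half:
  assumes "x > 0"
  shows "deriv (\<lambda>t. upper_gamma (Suc p) (t / 2) / Gamma (real (Suc p))) x = - (poisson_prob (x / 2) p / 2)"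
proof -
  have "((\<lambda>t. poisson_cdf (t / 2) (Suc p)) has_real_derivative - poisson_prob (x / 2) p * (1 / 2)) (at x)"
    by (rule DERIV_chain2[OF has_real_derivative_poisson_cdf]) (auto intro!: derivative_eq_intros)
  then have "((\<lambda>t. upper_gamma (Suc p) (t / 2) / Gamma (real (Suc p)))
      has_real_derivative - poisson_prob (x / 2) p * (1 / 2)) (at x)"
    by (rule has_field_derivative_transform_within_open[of _ _ _ "{0<..}"])
      (use assms in \<open>auto simp: upper_gamma_Suc_div_Gamma simp del: of_nat_Suc\<close>)
  then show ?thesis
    by (simp add: DERIV_imp_deriv)
qed

theorem corollary3:
  fixes N L :: nat and sp2 N0 Y :: real
  assumes "N \<ge> 1" and "L \<ge> 1" and "sp2 > 0" and "N0 > 0" and "Y \<ge> 0"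
  defines "Pd \<equiv> (\<lambda>lam. marcumQ (N * L) (sqrt (2 * real L * sp2 * Y / N0)) (sqrt lam))"
      and "Pf \<equiv> (\<lambda>lam. upper_gamma (N * L) (lam / 2) / Gamma (real (N * L)))"
  shows "- integral {0..} (\<lambda>lam. Pd lam * deriv Pf lam)
         = 1 - exp (- (real L * sp2 * Y / N0)) *
             (\<Sum>l<N * L. pochhammer (real (N * L)) l / (fact l * 2 ^ (N * L + l)) *
                hyp1F1 (real (N * L + l)) (real (N * L)) (real L * sp2 * Y / (2 * N0)))"
proof -
  obtain p where p: "N * L = Suc p"
    using assms(1,2) not0_implies_Suc[of "N * L"] by auto
  define c where "c = real L * sp2 * Y / N0"
  have c: "c \<ge> 0" and half: "real L * sp2 * Y / (2 * N0) = c / 2"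
    using assms by (simp_all add: c_def)
  have "(sqrt (2 * real L * sp2 * Y / N0))\<^sup>2 / 2 = c"
    using assms by (simp add: c_def)
  then have Pd: "(\<lambda>k. poisson_prob c k * poisson_cdf (x / 2) (Suc (k + p))) sums Pd x" if "x \<ge> 0" for x
    using marcumQ_Suc_sums[of "sqrt (2 * real L * sp2 * Y / N0)" "sqrt x" p] that assms
    by (simp add: Pd_def p)
  have "integral {0..} (\<lambda>x. Pd x * deriv Pf x)
      = integral {0..} (\<lambda>x. - (Pd x * (poisson_prob (x / 2) p / 2)))"
    by (rule integral_spike[of "{0}"])
      (auto simp: Pf_def p deriv_regularized_upper_gamma_half simp del: of_nat_Suc)
  then have "- integral {0..} (\<lambda>x. Pd x * deriv Pf x)
      = integral {0..} (\<lambda>x. Pd x * (poisson_prob (x / 2) p / 2))"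
    by simp
  also have "\<dots> = 1 - exp (- c) * (\<Sum>l<Suc p. pochhammer (real (Suc p)) l / (fact l * 2 ^ (Suc p + l))
      * hyp1F1 (real (Suc p + l)) (real (Suc p)) (c / 2))"
    by (rule integral_poisson_mixture_mult_poisson_prob[OF c Pd])
  finally show ?thesis
    unfolding p half c_def [symmetric] .
qed

end
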